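(* There is an absolute constant $c>0$ such that the following holds. Let $A=\{a_1<\dots<a_k\}$ and $A'=\{a'_1<\dots<a'_k\}$ be sets of real numbers, each with $k$ elements, having distinct pairs of consecutive differences, and let $B,B'$ be arbitrary finite nonempty sets of real numbers. Then \[ |A+B|\cdot|A'+B'|\ge c\left(k^3|B||B'|\right)^{1/2}. \] In particular, if $k=|A|=|A'|=|B|=|B'|$, then $|A+B|\cdot|A'+B'|\ge c\,k^{5/2}$.
   Context: For finite $X,Y\subset\mathbb{R}$, $X+Y=\{x+y:x\in X,y\in Y\}$. For $1\le i\le k-1$ let $d_i=a_{i+1}-a_i$ and $d'_i=a'_{i+1}-a'_i$. The sets $A$ and $A'$ have distinct pairs of consecutive differences if the ordered pairs $(d_i,d'_i)$, $1\le i\le k-1$, are pairwise distinct. *)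

theory Defs
  imports "HOL-Analysis.Analysis"
begin

definition sumset :: "real set \<Rightarrow> real set \<Rightarrow> real set" where
  "sumset X Y = {x + y | x y. x \<in> X \<and> y \<in> Y}"

text \<open>The i-th element (0-based) of a finite real set in increasing order.\<close>
definition elem :: "real set \<Rightarrow> nat \<Rightarrow> real" where
  "elem A i = sorted_list_of_set A ! i"

definition cdiff :: "real set \<Rightarrow> nat \<Rightarrow> real" where
  "cdiff A i = elem A (Suc i) - elem A i"

definition distinct_diff_pairs :: "real set \<Rightarrow> real set \<Rightarrow> bool" where
  "distinct_diff_pairs A A' \<longleftrightarrow>
     inj_on (\<lambda>i. (cdiff A i, cdiff A' i)) {..< card A - 1}"

end

theory Submission
  imports Defs
begin

text \<open>Measure distances in \<open>S = A + B\<close> by ranks. For fixed \<open>b \<in> B\<close> the points \<open>a\<^sub>i + b\<close> increase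
  through \<open>S\<close>, so their rank steps sum to at most \<open>|S|\<close>, and for all but \<open>k/4\<close> indices \<open>i\<close> the
  step is at most \<open>M = 4|S|/k\<close>; likewise for \<open>A' + B'\<close>. Hence each pair \<open>(b, b')\<close> has at least
  \<open>k/4\<close> indices \<open>i\<close> at which both steps are small. Sending \<open>(b, b', i)\<close> to the two pairs
  \<open>(a\<^sub>i + b, a\<^sub>i\<^sub>+\<^sub>1 + b)\<close> and \<open>(a'\<^sub>i + b', a'\<^sub>i\<^sub>+\<^sub>1 + b')\<close> is injective, because the pairs
  determine \<open>(d\<^sub>i, d'\<^sub>i)\<close> and hence \<open>i\<close>. A set \<open>S\<close> has at most \<open>|S|(M + 1)\<close> pairs at rank
  distance at most \<open>M\<close>, so \<open>|B||B'|k/4 \<le> (5|S|\<^sup>2/k)(5|S'|\<^sup>2/k)\<close>.\<close>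

definition rank :: "'a::linorder set \<Rightarrow> 'a \<Rightarrow> nat" where
  "rank S x = card {s \<in> S. s < x}"

lemma rank_mono: "finite S \<Longrightarrow> x \<le> y \<Longrightarrow> rank S x \<le> rank S y"
  unfolding rank_def by (rule card_mono) auto

lemma rank_le_card: "finite S \<Longrightarrow> rank S x \<le> card S"
  unfolding rank_def by (rule card_mono) auto

lemma rank_strict_mono: "finite S \<Longrightarrow> x \<in> S \<Longrightarrow> x < y \<Longrightarrow> rank S x < rank S y"
  unfolding rank_def by (rule psubset_card_mono) auto

lemma inj_on_rank: "finite S \<Longrightarrow> inj_on (rank S) S"
  by (metis inj_onI linorder_neqE nat_neq_iff rank_strict_mono)

definition close_pairs :: "'a::linorder set \<Rightarrow> real \<Rightarrow> ('a \<times> 'a) set" where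
  "close_pairs S M = {(x, y). x \<in> S \<and> y \<in> S \<and> rank S x \<le> rank S y \<and>
                               real (rank S y) \<le> real (rank S x) + M}"

lemma card_close_pairs_le:
  assumes S: "finite S" and M: "M \<ge> 0"
  shows "real (card (close_pairs S M)) \<le> real (card S) * (M + 1)"
proof -
  define Y where "Y x = {y \<in> S. rank S x \<le> rank S y \<and> real (rank S y) \<le> real (rank S x) + M}" for x
  have pairs_eq: "close_pairs S M = Sigma S Y"
    unfolding close_pairs_def Y_def by auto
  have card_Y: "card (Y x) \<le> nat \<lfloor>M\<rfloor> + 1" for x
  proof -
    have "rank S ` Y x \<subseteq> {rank S x .. rank S x + nat \<lfloor>M\<rfloor>}"
    proof (clarsimp simp: Y_def)
      fix y assume "rank S x \<le> rank S y" "real (rank S y) \<le> real (rank S x) + M"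
      then have "rank S y - rank S x \<le> nat \<lfloor>M\<rfloor>" by (intro le_nat_floor) simp
      then show "rank S y \<le> rank S x + nat \<lfloor>M\<rfloor>" by simp
    qed
    then have "card (rank S ` Y x) \<le> card {rank S x .. rank S x + nat \<lfloor>M\<rfloor>}"
      by (intro card_mono) auto
    then have "card (rank S ` Y x) \<le> nat \<lfloor>M\<rfloor> + 1" by simp
    moreover have "inj_on (rank S) (Y x)"
      using inj_on_rank[OF S] by (rule inj_on_subset) (auto simp: Y_def)
    ultimately show ?thesis by (simp add: card_image)
  qed
  have "card (Sigma S Y) = (\<Sum>x\<in>S. card (Y x))"
    using S by (simp add: Y_def)
  also have "\<dots> \<le> card S * (nat \<lfloor>M\<rfloor> + 1)"
    using sum_bounded_above[of S "\<lambda>x. card (Y x)"] card_Y by (metis of_nat_id)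
  finally have "real (card (Sigma S Y)) \<le> real (card S) * (real (nat \<lfloor>M\<rfloor>) + 1)"
    by (metis of_nat_1 of_nat_add of_nat_le_iff of_nat_mult)
  also have "\<dots> \<le> real (card S) * (M + 1)"
    using M by (intro mult_left_mono) auto
  finally show ?thesis by (simp add: pairs_eq)
qed

lemma card_large_steps_mult_le:
  fixes f :: "nat \<Rightarrow> real"
  assumes mono: "\<And>i. i < n \<Longrightarrow> f i \<le> f (Suc i)" and "M \<ge> 0"
  shows "real (card {i \<in> {..<n}. M < f (Suc i) - f i}) * M \<le> f n - f 0"
proof -
  let ?L = "{i \<in> {..<n}. M < f (Suc i) - f i}"
  have "real (card ?L) * M = (\<Sum>i\<in>?L. M)" by simp
  also have "\<dots> \<le> (\<Sum>i\<in>?L. f (Suc i) - f i)" by (rule sum_mono) auto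
  also have "\<dots> \<le> (\<Sum>i<n. f (Suc i) - f i)"
    by (rule sum_mono2) (auto intro: mono)
  also have "\<dots> = f n - f 0" by (rule sum_lessThan_telescope)
  finally show ?thesis .
qed

lemma card_both_lessThan_ge:
  "n \<le> card {i \<in> {..<n}. P i \<and> Q i} + card {i \<in> {..<n}. \<not> P i} + card {i \<in> {..<n}. \<not> Q i}"
proof -
  let ?G = "{i \<in> {..<n}. P i \<and> Q i}" and ?P = "{i \<in> {..<n}. \<not> P i}" and ?Q = "{i \<in> {..<n}. \<not> Q i}"
  have "{..<n} = ?G \<union> ?P \<union> ?Q" by auto
  then have "n = card (?G \<union> ?P \<union> ?Q)" by (metis card_lessThan)
  also have "\<dots> \<le> card (?G \<union> ?P) + card ?Q" by (rule card_Un_le)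
  also have "\<dots> \<le> card ?G + card ?P + card ?Q" using card_Un_le[of ?G ?P] by linarith
  finally show ?thesis .
qed

lemma elem_mem: "finite A \<Longrightarrow> i < card A \<Longrightarrow> elem A i \<in> A"
  unfolding elem_def by (metis length_sorted_list_of_set nth_mem set_sorted_list_of_set)

lemma elem_strict_mono: "finite A \<Longrightarrow> i < j \<Longrightarrow> j < card A \<Longrightarrow> elem A i < elem A j"
  unfolding elem_def
  by (metis length_sorted_list_of_set sorted_wrt_nth_less strict_sorted_list_of_set)

lemma sumset_memI: "a \<in> A \<Longrightarrow> b \<in> B \<Longrightarrow> a + b \<in> sumset A B"
  unfolding sumset_def by blast

lemma sumset_commute: "sumset A B = sumset B A"
  unfolding sumset_def by (metis add.commute)

lemma sumset_eq_image: "sumset A B = (\<lambda>(a, b). a + b) ` (A \<times> B)"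
  unfolding sumset_def by force

lemma finite_sumset: "finite A \<Longrightarrow> finite B \<Longrightarrow> finite (sumset A B)"
  by (simp add: sumset_eq_image)

lemma card_le_card_sumset:
  assumes "finite A" "finite B" "b \<in> B"
  shows "card A \<le> card (sumset A B)"
proof -
  have "(\<lambda>a. a + b) ` A \<subseteq> sumset A B" using assms sumset_memI by blast
  then have "card ((\<lambda>a. a + b) ` A) \<le> card (sumset A B)"
    using assms by (intro card_mono finite_sumset)
  then show ?thesis by (simp add: card_image)
qed

definition translate_gap :: "real set \<Rightarrow> real set \<Rightarrow> real \<Rightarrow> nat \<Rightarrow> real" where
  "translate_gap S A b i = real (rank S (elem A (Suc i) + b)) - real (rank S (elem A i + b))"

lemma card_large_translate_gaps_le:
  assumes A: "finite A" "card A = k" and B: "finite B" "b \<in> B"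
  defines "S \<equiv> sumset A B"
  shows "real (card {i \<in> {..<k - 1}. 4 * real (card S) / real k < translate_gap S A b i})
           \<le> real k / 4"
proof (cases "k = 0")
  case False
  let ?s = "real (card S)" and ?r = "\<lambda>j. real (rank S (elem A j + b))"
  have S: "finite S" unfolding S_def using A B by (simp add: finite_sumset)
  have "k \<le> card S" unfolding S_def using A B card_le_card_sumset by blast
  then have M_pos: "4 * ?s / real k > 0" using False by simp
  have "?r i \<le> ?r (Suc i)" if "i < k - 1" for i
  proof -
    have "elem A i < elem A (Suc i)" using that A elem_strict_mono by simp
    then show ?thesis using rank_mono[OF S] by simp
  qed
  then have "real (card {i \<in> {..<k - 1}. 4 * ?s / real k < ?r (Suc i) - ?r i}) * (4 * ?s / real k)
               \<le> ?r (k - 1) - ?r 0"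
    using M_pos by (intro card_large_steps_mult_le) auto
  also have "\<dots> \<le> ?s"
    using rank_le_card[OF S, of "elem A (k - 1) + b"] by simp
  finally show ?thesis
    using M_pos False by (simp add: translate_gap_def field_simps)
qed simp

lemma consecutive_translates_mem_close_pairs:
  assumes A: "finite A" "Suc i < card A" and B: "finite B" "b \<in> B"
    and gap: "translate_gap (sumset A B) A b i \<le> M"
  shows "(elem A i + b, elem A (Suc i) + b) \<in> close_pairs (sumset A B) M"
proof -
  have "elem A i < elem A (Suc i)" using A elem_strict_mono by blast
  then show ?thesis
    using assms elem_mem[OF A(1)] rank_mono[OF finite_sumset[OF A(1) B(1)]]
    by (auto simp: close_pairs_def translate_gap_def intro: sumset_memI)
qed

lemma inj_on_consecutive_translates:
  assumes "distinct_diff_pairs A A'" "card A = k"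
  shows "inj_on (\<lambda>((b, b'), i). ((elem A i + b, elem A (Suc i) + b),
                                  (elem A' i + b', elem A' (Suc i) + b')))
                (X \<times> {..<k - 1})"
proof -
  have index_eq: "i = j"
    if "i < k - 1" "j < k - 1" "cdiff A i = cdiff A j" "cdiff A' i = cdiff A' j" for i j
    using assms that by (auto simp: distinct_diff_pairs_def inj_on_def)
  show ?thesis
  proof (rule inj_onI, clarsimp)
    fix b b' i c c' j
    assume "i < k - Suc 0" "j < k - Suc 0"
      "elem A i + b = elem A j + c" "elem A (Suc i) + b = elem A (Suc j) + c"
      "elem A' i + b' = elem A' j + c'" "elem A' (Suc i) + b' = elem A' (Suc j) + c'"
    moreover from this have "i = j" by (intro index_eq) (auto simp: cdiff_def)
    ultimately show "b = c \<and> b' = c' \<and> i = j" by simp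
  qed
qed

lemma sumset_product_bound_large:
  assumes A: "finite A" "finite A'" "card A = k" "card A' = k" "distinct_diff_pairs A A'"
    and B: "finite B" "B \<noteq> {}" "finite B'" "B' \<noteq> {}"
    and k: "k \<ge> 4"
  shows "real k ^ 3 * real (card B) * real (card B')
         \<le> 100 * (real (card (sumset A B)) * real (card (sumset A' B'))) ^ 2"
proof -
  define S where "S = sumset A B"
  define S' where "S' = sumset A' B'"
  define s where "s = real (card S)"
  define s' where "s' = real (card S')"
  define M where "M = 4 * s / real k"
  define M' where "M' = 4 * s' / real k"
  define G where "G = (\<lambda>(b, b'). {i \<in> {..<k - 1}. translate_gap S A b i \<le> M \<and>
                                                 translate_gap S' A' b' i \<le> M'})"
  define T where "T = Sigma (B \<times> B') G"
  define f where "f = (\<lambda>((b, b'), i). ((elem A i + b, elem A (Suc i) + b),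
                                       (elem A' i + b', elem A' (Suc i) + b')))"
  have fin: "finite S" "finite S'" unfolding S_def S'_def using A B by (simp_all add: finite_sumset)
  have "k \<le> card S" "k \<le> card S'"
    using A B card_le_card_sumset unfolding S_def S'_def by (metis ex_in_conv)+
  then have s_ge: "s \<ge> real k" "s' \<ge> real k" unfolding s_def s'_def by auto
  have good: "real k / 4 \<le> real (card (G (b, b')))" if "b \<in> B" "b' \<in> B'" for b b'
  proof -
    have "real (k - 1) \<le> real (card (G (b, b'))) + real (card {i \<in> {..<k - 1}. M < translate_gap S A b i})
                          + real (card {i \<in> {..<k - 1}. M' < translate_gap S' A' b' i})"
      using card_both_lessThan_ge[of "k - 1" "\<lambda>i. translate_gap S A b i \<le> M"
                                             "\<lambda>i. translate_gap S' A' b' i \<le> M'"]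
      unfolding G_def not_le by simp
    moreover have "real (card {i \<in> {..<k - 1}. M < translate_gap S A b i}) \<le> real k / 4"
      using card_large_translate_gaps_le[OF A(1,3) B(1) that(1)]
      unfolding M_def s_def S_def .
    moreover have "real (card {i \<in> {..<k - 1}. M' < translate_gap S' A' b' i}) \<le> real k / 4"
      using card_large_translate_gaps_le[OF A(2,4) B(3) that(2)]
      unfolding M'_def s'_def S'_def .
    ultimately show ?thesis using k by (simp add: of_nat_diff)
  qed
  have "real (card B) * real (card B') * (real k / 4) = (\<Sum>p\<in>B \<times> B'. real k / 4)"
    by (simp add: card_cartesian_product)
  also have "\<dots> \<le> (\<Sum>p\<in>B \<times> B'. real (card (G p)))"
    by (rule sum_mono) (use good in auto)
  also have "\<dots> = real (card T)"
    unfolding T_def using B by (subst card_SigmaI) (auto simp: G_def)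
  also have "card T \<le> card (close_pairs S M \<times> close_pairs S' M')"
  proof (rule card_inj_on_le)
    show "inj_on f T"
      unfolding f_def using inj_on_consecutive_translates[OF A(5) A(3), of "B \<times> B'"]
      by (rule inj_on_subset) (auto simp: T_def G_def)
    show "f ` T \<subseteq> close_pairs S M \<times> close_pairs S' M'"
      using A B consecutive_translates_mem_close_pairs
      by (fastforce simp: T_def G_def f_def S_def S'_def)
    show "finite (close_pairs S M \<times> close_pairs S' M')"
      using fin by (auto intro: finite_subset[of _ "S \<times> S"] finite_subset[of _ "S' \<times> S'"]
                         simp: close_pairs_def)
  qed
  also have "real (card (close_pairs S M \<times> close_pairs S' M'))
             \<le> s * (M + 1) * (s' * (M' + 1))"
    using card_close_pairs_le[OF fin(1), of M] card_close_pairs_le[OF fin(2), of M'] s_ge k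
    unfolding card_cartesian_product s_def s'_def M_def M'_def
    by (simp only: of_nat_mult) (intro mult_mono; simp)
  also have "\<dots> \<le> s * (5 * s / real k) * (s' * (5 * s' / real k))"
    using s_ge k unfolding M_def M'_def by (intro mult_mono) (simp_all add: field_simps)
  finally have "real (card B) * real (card B') * real k ^ 3 \<le> 100 * (s * s') ^ 2"
    using k by (simp add: field_simps power2_eq_square power3_eq_cube)
  then show ?thesis
    unfolding s_def s'_def S_def S'_def by (simp add: algebra_simps)
qed

lemma sumset_product_bound_small:
  assumes A: "finite A" "finite A'" "card A = k" "card A' = k"
    and B: "finite B" "B \<noteq> {}" "finite B'" "B' \<noteq> {}"
    and k: "k \<le> 3"
  shows "real k ^ 3 * real (card B) * real (card B')
         \<le> 100 * (real (card (sumset A B)) * real (card (sumset A' B'))) ^ 2"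
proof (cases "k = 0")
  case False
  define u where "u = real (card B) * real (card B')"
  define P where "P = real (card (sumset A B)) * real (card (sumset A' B'))"
  obtain a a' where "a \<in> A" "a' \<in> A'" using A False by fastforce
  then have "card B \<le> card (sumset A B)" "card B' \<le> card (sumset A' B')"
    using card_le_card_sumset A B by (simp_all add: sumset_commute[of A] sumset_commute[of A'])
  then have uP: "u \<le> P" unfolding u_def P_def by (intro mult_mono) auto
  have "1 \<le> real (card B)" "1 \<le> real (card B')"
    using B by (simp_all add: Suc_le_eq card_gt_0_iff)
  then have u1: "1 \<le> u" unfolding u_def using mult_mono[of 1 "real (card B)" 1 "real (card B')"] by simp
  have "real k ^ 3 \<le> 3 ^ 3" using k by (intro power_mono) auto
  then have "real k ^ 3 * u \<le> 27 * u" using u1 by (intro mult_right_mono) auto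
  also have "\<dots> \<le> 27 * (u * u)"
    using mult_left_mono[OF u1, of u] u1 by simp
  also have "\<dots> \<le> 100 * P ^ 2"
  proof -
    have "u * u \<le> P * P" using uP u1 by (intro mult_mono) auto
    moreover have "0 \<le> u * u" using u1 by simp
    ultimately show ?thesis unfolding power2_eq_square by linarith
  qed
  finally show ?thesis unfolding u_def P_def by (simp add: mult.assoc)
qed simp

theorem theorem3:
  shows "\<exists>c::real. c > 0 \<and>
    (\<forall>(A::real set) (A'::real set) (B::real set) (B'::real set) (k::nat).
       finite A \<longrightarrow> finite A' \<longrightarrow> card A = k \<longrightarrow> card A' = k \<longrightarrow>
       distinct_diff_pairs A A' \<longrightarrow>
       finite B \<longrightarrow> B \<noteq> {} \<longrightarrow> finite B' \<longrightarrow> B' \<noteq> {} \<longrightarrow>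
       real (card (sumset A B)) * real (card (sumset A' B'))
         \<ge> c * sqrt (real k ^ 3 * real (card B) * real (card B')))"
proof (intro exI[of _ "1/10"] conjI allI impI)
  fix A A' B B' :: "real set" and k :: nat
  define P where "P = real (card (sumset A B)) * real (card (sumset A' B'))"
  assume A: "finite A" "finite A'" "card A = k" "card A' = k" "distinct_diff_pairs A A'"
    and B: "finite B" "B \<noteq> {}" "finite B'" "B' \<noteq> {}"
  have "real k ^ 3 * real (card B) * real (card B') \<le> 100 * P ^ 2"
  proof (cases "k \<ge> 4")
    case True
    show ?thesis unfolding P_def by (rule sumset_product_bound_large[OF A B True])
  next
    case False
    show ?thesis unfolding P_def by (rule sumset_product_bound_small[OF A(1-4) B]) (use False in simp)
  qed
  moreover have "0 \<le> P" unfolding P_def by simp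
  ultimately have "sqrt (real k ^ 3 * real (card B) * real (card B')) \<le> 10 * P"
    using real_le_lsqrt[of "10 * P"] by (simp add: power_mult_distrib)
  then show "1/10 * sqrt (real k ^ 3 * real (card B) * real (card B')) \<le> P"
    by linarith
qed simp

end
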